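(* Let $X$ be an infinite-dimensional normed vector space over $\mathbb R$, with the metric induced by the norm. Then $h_\infty(X)=\infty$.
   Context: For a metric space $(X,d)$, $\delta>0$, $n\in\mathbb N$, $x_0\in X$: a $\delta$-path of length $n$ starting at $x_0$ is a sequence $(x_0,x_1,\dots,x_n)$ in $X$ with $d(x_i,x_{i+1})\le\delta$ for all $i$. Let $P(n,\delta,x_0)$ be the set of such $\delta$-paths, with distance $\max_i d(x_i,y_i)$ between $(x_i)$ and $(y_i)$. A set is $R$-separated if distinct elements are at distance $\ge R$. Let $s(n,R,\delta,x_0)$ be the supremum of cardinalities of $R$-separated subsets of $P(n,\delta,x_0)$. The coarse entropy of $X$ is $h_\infty(X)=\lim_{\delta\to\infty}\lim_{R\to\infty}\limsup_{n\to\infty}\frac1n\log s(n,R,\delta,x_0)\in[0,\infty]$ (independent of $x_0$); it equals the coarse entropy of the identity map of $X$ (and of any isometric self-embedding of $X$). *)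

theory Defs
  imports "HOL-Analysis.Analysis"
begin

text \<open>delta-paths of length n starting at x0, represented as functions on nat
  whose values after index n are normalised to x0 (so they correspond
  bijectively to tuples (x_0,...,x_n)).\<close>
definition dpaths :: "nat \<Rightarrow> real \<Rightarrow> 'a::metric_space \<Rightarrow> (nat \<Rightarrow> 'a) set" where
  "dpaths n \<delta> x0 = {p. p 0 = x0 \<and> (\<forall>i<n. dist (p i) (p (Suc i)) \<le> \<delta>) \<and> (\<forall>i>n. p i = x0)}"

definition pdist :: "nat \<Rightarrow> (nat \<Rightarrow> 'a::metric_space) \<Rightarrow> (nat \<Rightarrow> 'a) \<Rightarrow> real" where
  "pdist n p q = Max ((\<lambda>i. dist (p i) (q i)) ` {0..n})"

definition separated :: "nat \<Rightarrow> real \<Rightarrow> (nat \<Rightarrow> 'a::metric_space) set \<Rightarrow> bool" where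
  "separated n R S \<longleftrightarrow> (\<forall>p\<in>S. \<forall>q\<in>S. p \<noteq> q \<longrightarrow> pdist n p q \<ge> R)"

definition sep_num :: "nat \<Rightarrow> real \<Rightarrow> real \<Rightarrow> 'a::metric_space \<Rightarrow> ereal" where
  "sep_num n R \<delta> x0 = (SUP S \<in> {S. S \<subseteq> dpaths n \<delta> x0 \<and> separated n R S}. (if finite S then ereal (real (card S)) else \<infinity>))"

definition eln :: "ereal \<Rightarrow> ereal" where
  "eln s = (if s = \<infinity> then \<infinity> else ereal (ln (real_of_ereal s)))"

definition coarse_entropy :: "'a::metric_space \<Rightarrow> ereal" where
  "coarse_entropy x0 =
     Lim at_top (\<lambda>\<delta>::real. Lim at_top (\<lambda>R::real.
        limsup (\<lambda>n::nat. ereal (1 / real n) * eln (sep_num n R \<delta> x0))))"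

end

theory Submission
  imports Defs
begin

text \<open>In an infinite-dimensional normed space, Riesz's lemma produces, for every \<open>N\<close>, unit
  vectors \<open>u\<^sub>1, \<dots>, u\<^sub>N\<close> at mutual distance at least \<open>1/2\<close>. The straight \<open>\<delta>\<close>-paths
  \<open>i \<mapsto> x\<^sub>0 + i \<delta> u\<^sub>k\<close> of length \<open>n\<close> end at mutual distance at least \<open>n \<delta> / 2\<close>, so as soon as
  \<open>n \<delta> \<ge> 2 R\<close> they form an \<open>R\<close>-separated family of size \<open>N\<close>. Hence \<open>s(n, R, \<delta>, x\<^sub>0) = \<infinity>\<close>
  for all large \<open>n\<close>, and every limit in the definition of the coarse entropy is \<open>\<infinity>\<close>.\<close>

lemma abs_mult_infdist_le_norm:
  fixes a :: "'a::real_normed_vector"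
  assumes "subspace S" "y \<in> S"
  shows "\<bar>t\<bar> * infdist a S \<le> norm (t *\<^sub>R a + y)"
proof (cases "t = 0")
  case True
  then show ?thesis by simp
next
  case False
  have "- ((1/t) *\<^sub>R y) \<in> S"
    using assms by (simp add: subspace_neg subspace_scale)
  then have "infdist a S \<le> norm (a + (1/t) *\<^sub>R y)"
    using infdist_le by (fastforce simp: dist_norm)
  then have "\<bar>t\<bar> * infdist a S \<le> \<bar>t\<bar> * norm (a + (1/t) *\<^sub>R y)"
    by (simp add: mult_left_mono)
  also have "\<dots> = norm (t *\<^sub>R a + y)"
    using False by (simp flip: norm_scaleR add: scaleR_add_right)
  finally show ?thesis .
qed

lemma closed_span_insert:
  fixes a :: "'a::real_normed_vector"
  assumes "closed (span B)"
  shows "closed (span (insert a B))"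
proof (cases "a \<in> span B")
  case True
  then show ?thesis using assms by (simp add: span_redundant)
next
  case False
  define d where "d = infdist a (span B)"
  have "span B \<noteq> {}"
    using span_zero by blast
  then have "d > 0"
    unfolding d_def by (rule infdist_pos_not_in_closed[OF assms _ False])
  show ?thesis unfolding closed_sequential_limits
  proof (intro allI impI, elim conjE)
    fix z :: "nat \<Rightarrow> 'a" and l
    assume z: "\<forall>n. z n \<in> span (insert a B)" and lim: "z \<longlonglongrightarrow> l"
    have "\<forall>n. \<exists>k. z n - k *\<^sub>R a \<in> span B"
      using z unfolding span_insert by blast
    then obtain t where t: "\<And>n. z n - t n *\<^sub>R a \<in> span B"
      by metis
    have coeff_le: "\<bar>t m - t n\<bar> * d \<le> dist (z m) (z n)" for m n
    proof -
      have "(z m - t m *\<^sub>R a) - (z n - t n *\<^sub>R a) \<in> span B"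
        using t by (simp add: span_diff)
      from abs_mult_infdist_le_norm[OF subspace_span this, of "t m - t n" a]
      have "\<bar>t m - t n\<bar> * d \<le> norm ((t m - t n) *\<^sub>R a + ((z m - t m *\<^sub>R a) - (z n - t n *\<^sub>R a)))"
        by (simp add: d_def)
      also have "(t m - t n) *\<^sub>R a + ((z m - t m *\<^sub>R a) - (z n - t n *\<^sub>R a)) = z m - z n"
        by (simp add: algebra_simps)
      finally show ?thesis
        by (simp add: dist_norm)
    qed
    have "Cauchy t"
    proof (rule metric_CauchyI)
      fix e :: real
      assume "e > 0"
      then have "e * d > 0"
        using \<open>d > 0\<close> by simp
      then obtain M where M: "\<forall>m\<ge>M. \<forall>n\<ge>M. dist (z m) (z n) < e * d"
        using LIMSEQ_imp_Cauchy[OF lim] unfolding Cauchy_def by blast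
      have "dist (t m) (t n) < e" if "m \<ge> M" "n \<ge> M" for m n
      proof -
        have "\<bar>t m - t n\<bar> * d < e * d"
          using M coeff_le[of m n] that by fastforce
        then show ?thesis
          using \<open>d > 0\<close> by (simp add: dist_real_def)
      qed
      then show "\<exists>M. \<forall>m\<ge>M. \<forall>n\<ge>M. dist (t m) (t n) < e"
        by blast
    qed
    then obtain T where "t \<longlonglongrightarrow> T"
      using Cauchy_convergent_iff convergent_def by blast
    then have "(\<lambda>n. z n - t n *\<^sub>R a) \<longlonglongrightarrow> l - T *\<^sub>R a"
      by (intro tendsto_intros lim)
    then have "l - T *\<^sub>R a \<in> span B"
      by (rule closed_sequentially[OF assms t])
    then show "l \<in> span (insert a B)"
      unfolding span_insert by blast
  qed
qed

lemma closed_span_finite: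
  fixes B :: "'a::real_normed_vector set"
  assumes "finite B"
  shows "closed (span B)"
  using assms by induct (simp_all add: closed_span_insert)

lemma riesz_lemma:
  fixes S :: "'a::real_normed_vector set"
  assumes "subspace S" "closed S" "S \<noteq> UNIV"
  shows "\<exists>v. norm v = 1 \<and> (\<forall>y\<in>S. 1/2 \<le> dist v y)"
proof -
  obtain x where "x \<notin> S" using assms(3) by blast
  define d where "d = infdist x S"
  have "S \<noteq> {}" using assms(1) subspace_0 by blast
  have "d > 0"
    unfolding d_def using infdist_pos_not_in_closed[OF assms(2) \<open>S \<noteq> {}\<close> \<open>x \<notin> S\<close>] .
  then have "(INF a\<in>S. dist x a) < 2 * d"
    using \<open>S \<noteq> {}\<close> unfolding d_def infdist_def by simp
  then obtain y0 where y0: "y0 \<in> S" "dist x y0 < 2 * d"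
    using \<open>S \<noteq> {}\<close> by (subst (asm) cINF_less_iff) (auto intro: bdd_belowI2[where m=0])
  define r where "r = norm (x - y0)"
  have "r > 0" "r < 2 * d"
    using y0 \<open>x \<notin> S\<close> by (auto simp: r_def dist_norm)
  define v where "v = (1/r) *\<^sub>R (x - y0)"
  have "1/2 \<le> dist v y" if "y \<in> S" for y
  proof -
    have "y0 + r *\<^sub>R y \<in> S"
      using assms(1) that y0(1) by (simp add: subspace_add subspace_scale)
    then have "d \<le> dist x (y0 + r *\<^sub>R y)"
      unfolding d_def by (rule infdist_le)
    also have "\<dots> = norm (r *\<^sub>R (v - y))"
      using \<open>r > 0\<close> by (simp add: v_def dist_norm algebra_simps)
    also have "\<dots> = r * dist v y"
      using \<open>r > 0\<close> by (simp add: dist_norm)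
    finally have "r * (1/2) \<le> r * dist v y"
      using \<open>r < 2 * d\<close> by linarith
    then show ?thesis
      using \<open>r > 0\<close> by simp
  qed
  moreover have "norm v = 1"
    using \<open>r > 0\<close> by (simp add: v_def r_def)
  ultimately show ?thesis by blast
qed

lemma infinite_dim_separated_unit_vectors:
  assumes "\<not> (\<exists>B::'a::real_normed_vector set. finite B \<and> span B = UNIV)"
  shows "\<exists>S::'a set. finite S \<and> card S = N \<and> (\<forall>u\<in>S. norm u = 1) \<and>
           (\<forall>u\<in>S. \<forall>w\<in>S. u \<noteq> w \<longrightarrow> 1/2 \<le> dist u w)"
proof (induction N)
  case 0
  show ?case by (intro exI[of _ "{}"]) simp
next
  case (Suc N)
  then obtain S :: "'a set" where S: "finite S" "card S = N" "\<forall>u\<in>S. norm u = 1"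
    "\<forall>u\<in>S. \<forall>w\<in>S. u \<noteq> w \<longrightarrow> 1/2 \<le> dist u w"
    by (elim exE conjE)
  have "span S \<noteq> UNIV"
    using assms S(1) by blast
  then obtain v where v: "norm v = 1" "\<forall>y\<in>span S. 1/2 \<le> dist v y"
    using riesz_lemma[OF subspace_span closed_span_finite[OF S(1)]] by blast
  then have far: "1/2 \<le> dist v u" if "u \<in> S" for u
    using span_base[OF that] by blast
  then have "v \<notin> S"
    by fastforce
  show ?case
  proof (intro exI[of _ "insert v S"] conjI)
    show "finite (insert v S)" "card (insert v S) = Suc N"
      using S(1,2) \<open>v \<notin> S\<close> by simp_all
    show "\<forall>u\<in>insert v S. norm u = 1"
      using S(3) v(1) by simp
    show "\<forall>u\<in>insert v S. \<forall>w\<in>insert v S. u \<noteq> w \<longrightarrow> 1/2 \<le> dist u w"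
      using S(4) far by (auto simp: dist_commute)
  qed
qed

lemma ereal_eq_infinity_if_nat_le:
  fixes x :: ereal
  assumes "\<And>N::nat. ereal (real N) \<le> x"
  shows "x = \<infinity>"
proof -
  have "(SUP N. ereal (real N)) \<le> x"
    using assms by (rule SUP_least)
  then show ?thesis by (simp add: SUP_nat_Infty)
qed

definition ray_path :: "nat \<Rightarrow> real \<Rightarrow> 'a::real_normed_vector \<Rightarrow> 'a \<Rightarrow> nat \<Rightarrow> 'a" where
  "ray_path n \<delta> x0 u i = (if i \<le> n then x0 + (real i * \<delta>) *\<^sub>R u else x0)"

lemma ray_path_in_dpaths:
  assumes "\<delta> \<ge> 0" "norm u = 1"
  shows "ray_path n \<delta> x0 u \<in> dpaths n \<delta> x0"
proof -
  have "dist (ray_path n \<delta> x0 u i) (ray_path n \<delta> x0 u (Suc i)) \<le> \<delta>" if "i < n" for i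
  proof -
    have "ray_path n \<delta> x0 u (Suc i) - ray_path n \<delta> x0 u i = \<delta> *\<^sub>R u"
      using that by (simp add: ray_path_def algebra_simps)
    then show ?thesis
      using assms by (metis abs_of_nonneg dist_commute dist_norm mult_1_right norm_scaleR order_refl)
  qed
  moreover have "ray_path n \<delta> x0 u 0 = x0" "\<forall>i>n. ray_path n \<delta> x0 u i = x0"
    by (simp_all add: ray_path_def)
  ultimately show ?thesis
    unfolding dpaths_def by blast
qed

lemma dist_ray_path_end:
  assumes "\<delta> \<ge> 0"
  shows "dist (ray_path n \<delta> x0 u n) (ray_path n \<delta> x0 w n) = real n * \<delta> * dist u w"
proof -
  have "dist (ray_path n \<delta> x0 u n) (ray_path n \<delta> x0 w n) = norm ((real n * \<delta>) *\<^sub>R (u - w))"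
    by (simp add: ray_path_def dist_norm scaleR_diff_right)
  then show ?thesis
    using assms by (simp add: dist_norm)
qed

lemma sep_num_eq_infinity:
  fixes x0 :: "'a::real_normed_vector"
  assumes "\<not> (\<exists>B::'a set. finite B \<and> span B = UNIV)" "\<delta> > 0" "n > 0" "2 * R \<le> real n * \<delta>"
  shows "sep_num n R \<delta> x0 = \<infinity>"
proof (rule ereal_eq_infinity_if_nat_le)
  fix N :: nat
  obtain S :: "'a set" where S: "finite S" "card S = N" "\<forall>u\<in>S. norm u = 1"
    "\<forall>u\<in>S. \<forall>w\<in>S. u \<noteq> w \<longrightarrow> 1/2 \<le> dist u w"
    using infinite_dim_separated_unit_vectors[OF assms(1), of N] by (elim exE conjE)
  define P where "P = ray_path n \<delta> x0"
  have "inj_on P S"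
  proof (rule inj_onI)
    fix u w
    assume "u \<in> S" "w \<in> S" "P u = P w"
    then have "real n * \<delta> * dist u w = 0"
      using assms(2) dist_ray_path_end[of \<delta> n x0 u w] by (simp add: P_def)
    then show "u = w"
      using assms(2,3) by simp
  qed
  have "P ` S \<subseteq> dpaths n \<delta> x0"
    using S(3) assms(2) by (auto simp: P_def intro: ray_path_in_dpaths)
  moreover have "separated n R (P ` S)"
    unfolding separated_def
  proof (intro ballI impI)
    fix p q
    assume "p \<in> P ` S" "q \<in> P ` S" "p \<noteq> q"
    then obtain u w where uw: "u \<in> S" "w \<in> S" "u \<noteq> w" "p = P u" "q = P w"
      by blast
    have "R \<le> real n * \<delta> * (1/2)"
      using assms(4) by simp
    also have "\<dots> \<le> real n * \<delta> * dist u w"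
      using S(4) uw assms(2) by (intro mult_left_mono) auto
    also have "\<dots> = dist (p n) (q n)"
      using assms(2) uw by (simp add: P_def dist_ray_path_end)
    also have "\<dots> \<le> pdist n p q"
      unfolding pdist_def by (intro Max_ge) auto
    finally show "R \<le> pdist n p q" .
  qed
  ultimately have "ereal (real (card (P ` S))) \<le> sep_num n R \<delta> x0"
    unfolding sep_num_def using S(1) by (intro SUP_upper2[of "P ` S"]) auto
  then show "ereal (real N) \<le> sep_num n R \<delta> x0"
    using S(2) \<open>inj_on P S\<close> by (simp add: card_image)
qed

lemma Lim_eventually_const:
  assumes "F \<noteq> bot" "eventually (\<lambda>x. f x = c) F"
  shows "Lim F f = (c::'b::t2_space)"
  using tendsto_Lim[OF assms(1) tendsto_eventually[OF assms(2)]] by simp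

lemma limsup_sep_num_rate_eq_infinity:
  fixes x0 :: "'a::real_normed_vector"
  assumes "\<not> (\<exists>B::'a set. finite B \<and> span B = UNIV)" "\<delta> > 0"
  shows "limsup (\<lambda>n::nat. ereal (1 / real n) * eln (sep_num n R \<delta> x0)) = \<infinity>"
proof -
  have "eventually (\<lambda>n::nat. ereal (1 / real n) * eln (sep_num n R \<delta> x0) = \<infinity>) sequentially"
    using eventually_ge_at_top[of "Suc (nat \<lceil>2 * R / \<delta>\<rceil>)"]
  proof eventually_elim
    case (elim n)
    then have "2 * R / \<delta> \<le> real n"
      using real_nat_ceiling_ge[of "2 * R / \<delta>"] by linarith
    then have "2 * R \<le> real n * \<delta>"
      using assms(2) by (simp add: pos_divide_le_eq)
    moreover have "n > 0"
      using elim by simp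
    ultimately show ?case
      by (simp add: sep_num_eq_infinity[OF assms] eln_def)
  qed
  then have "limsup (\<lambda>n::nat. ereal (1 / real n) * eln (sep_num n R \<delta> x0)) =
      limsup (\<lambda>n::nat. \<infinity>::ereal)"
    by (rule Limsup_eq)
  then show ?thesis
    by (simp add: Limsup_const)
qed

theorem mainTheorem2:
  fixes x0 :: "'a::real_normed_vector"
  assumes "\<not> (\<exists>B::'a set. finite B \<and> span B = UNIV)"
  shows "coarse_entropy x0 = \<infinity>"
proof -
  have "Lim at_top (\<lambda>R::real. limsup (\<lambda>n::nat. ereal (1 / real n) * eln (sep_num n R \<delta> x0))) = \<infinity>"
    if "\<delta> > 0" for \<delta> :: real
    by (rule Lim_eventually_const) (simp_all add: limsup_sep_num_rate_eq_infinity[OF assms that])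
  then show ?thesis
    unfolding coarse_entropy_def
    by (intro Lim_eventually_const) (auto intro: eventually_mono[OF eventually_gt_at_top[of 0]])
qed

end
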